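(* Let $(E,\mathcal{E},\mu)$ be a $\sigma$-finite measure space and let $f:E\to\mathbb{R}$ be $\mathcal{E}/\mathcal{B}(\mathbb{R})$-measurable with $f(x)\ge 0$ for all $x\in E$ and $K:=\int_E f(x)\,\mu(dx)\in(0,\infty)$. Let $\nu$ be the measure on $(E\times\mathbb{R},\mathcal{E}\otimes\mathcal{B}(\mathbb{R}))$ given by $\nu(C)=\iint_{E\times\mathbb{R}}1_C(x,y)\,\mu(dx)\,dy$, and let $\Gamma[f]=\{(x,y)\in E\times\mathbb{R}: 0\le y\le f(x)\}$. Let $N\in\mathbb{N}$ and let $B_1,\dots,B_N\in\mathcal{E}\otimes\mathcal{B}(\mathbb{R})$ with $B:=\bigcup_{i=1}^N B_i$ satisfy: $\nu(B_i)>0$ for all $i$; $\nu(B_i\cap B_j)=0$ for $i\ne j$; $\nu(\Gamma[f]\setminus B)=0$ and $\nu(B)<\infty$. Define $\Psi:[0,1)\to\{1,\dots,N\}$ by $\Psi(u)=\min\{i\in\{1,\dots,N\}: u<\sum_{j=1}^i \nu(B_j)/\nu(B)\}$, set $B_i[f]:=B_i\cap\Gamma[f]$, and define $$\Lambda:=\{(u,v_1,\dots,v_N,w_1,\dots,w_N)\in[0,1)\times E^N\times\mathbb{R}^N : (v_{\Psi(u)},w_{\Psi(u)})\in B_{\Psi(u)}[f]\}.$$ Let $(\Omega,\mathcal{F},P)$ be a probability space carrying real random variables $U,W_1,\dots,W_N$ and $(E,\mathcal{E})$-valued random variables $V_1,\dots,V_N$ such that, for each $i=1,\dots,N$, $(V_i,W_i)$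 and $U$ are independent, $P((V_i,W_i)\in C)=\nu(C\cap B_i)/\nu(B_i)$ for all $C\in\mathcal{E}\otimes\mathcal{B}(\mathbb{R})$, and $U$ is uniformly distributed on $[0,1)$ (i.e. $P(U\in D)=\int_D 1_{[0,1)}(u)\,du$ for $D\in\mathcal{B}(\mathbb{R})$). Let $Z:=(U,V_1,\dots,V_N,W_1,\dots,W_N)$. Then for every $A\in\mathcal{E}$, $$P\big(V_{\Psi(U)}\in A,\ Z\in\Lambda\big)=\frac{1}{\nu(B)}\int_A f(x)\,\mu(dx).$$
   Context: $\mathcal{B}(\mathbb{R})$ denotes the Borel $\sigma$-algebra of $\mathbb{R}$ and $\mathcal{E}\otimes\mathcal{B}(\mathbb{R})$ the product $\sigma$-algebra. $V_{\Psi(U)}$ denotes the random variable $\omega\mapsto V_{\Psi(U(\omega))}(\omega)$ (on the event $U\in[0,1)$, which has probability one). *)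

theory Defs
  imports "HOL-Probability.Probability"
begin

definition Gamma :: "'e measure \<Rightarrow> ('e \<Rightarrow> real) \<Rightarrow> ('e \<times> real) set" where
  "Gamma M f = {(x, y). x \<in> space M \<and> 0 \<le> y \<and> y \<le> f x}"

definition Bunion :: "nat \<Rightarrow> (nat \<Rightarrow> 'b set) \<Rightarrow> 'b set" where
  "Bunion N B = (\<Union>i\<in>{1..N}. B i)"

definition Psi :: "'b measure \<Rightarrow> nat \<Rightarrow> (nat \<Rightarrow> 'b set) \<Rightarrow> real \<Rightarrow> nat" where
  "Psi nu N B u = (LEAST i. i \<in> {1..N} \<and>
      u < (\<Sum>j=1..i. measure nu (B j) / measure nu (Bunion N B)))"

text \<open>Lambda, with points (u, v, w) where v, w are the vectors (v_1..v_N), (w_1..w_N),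
  represented as functions on indices (only indices 1..N matter).\<close>
definition Lambda :: "'e measure \<Rightarrow> ('e \<Rightarrow> real) \<Rightarrow> nat \<Rightarrow> (nat \<Rightarrow> ('e \<times> real) set)
    \<Rightarrow> (real \<times> (nat \<Rightarrow> 'e) \<times> (nat \<Rightarrow> real)) set" where
  "Lambda M f N B = {(u, v, w). u \<in> {0..<1} \<and> (\<forall>i\<in>{1..N}. v i \<in> space M) \<and>
      (v (Psi (M \<Otimes>\<^sub>M lborel) N B u), w (Psi (M \<Otimes>\<^sub>M lborel) N B u))
        \<in> B (Psi (M \<Otimes>\<^sub>M lborel) N B u) \<inter> Gamma M f}"

end

theory Submission
  imports Defs
begin

(* With s_i = (nu(B_1) + ... + nu(B_i)) / nu(B), Psi(u) = i exactly when u lies in [s_(i-1), s_i),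
   so the event splits into the disjoint events "(V_i, W_i) in (A x R) /\ Gamma[f] /\ B_i and
   U in [s_(i-1), s_i)". By independence and uniformity of U the i-th one has probability
   nu((A x R) /\ Gamma[f] /\ B_i) / nu(B_i) * nu(B_i) / nu(B). As the B_i are a.e. disjoint and
   cover Gamma[f] up to a null set, these add up to nu((A x R) /\ Gamma[f]) / nu(B), and by
   Tonelli nu((A x R) /\ Gamma[f]) is the integral of f over A. *)

lemma Gamma_sets:
  assumes "f \<in> borel_measurable M"
  shows "Gamma M f \<in> sets (M \<Otimes>\<^sub>M lborel)"
proof -
  have "Gamma M f = {p \<in> space (M \<Otimes>\<^sub>M lborel). 0 \<le> snd p \<and> snd p \<le> f (fst p)}"
    by (auto simp: Gamma_def space_pair_measure)
  also have "\<dots> \<in> sets (M \<Otimes>\<^sub>M lborel)"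
    using assms by measurable
  finally show ?thesis .
qed

lemma subgraph_restrict_sets:
  assumes "f \<in> borel_measurable M" "A \<in> sets M"
  shows "(A \<times> UNIV) \<inter> Gamma M f \<in> sets (M \<Otimes>\<^sub>M lborel)"
  using assms by (intro sets.Int pair_measureI Gamma_sets) auto

lemma emeasure_subgraph_restrict:
  assumes "f \<in> borel_measurable M" "\<And>x. x \<in> space M \<Longrightarrow> 0 \<le> f x" "A \<in> sets M"
  shows "emeasure (M \<Otimes>\<^sub>M lborel) ((A \<times> UNIV) \<inter> Gamma M f) = (\<integral>\<^sup>+ x\<in>A. ennreal (f x) \<partial>M)"
proof -
  have "emeasure (M \<Otimes>\<^sub>M lborel) ((A \<times> UNIV) \<inter> Gamma M f)
      = (\<integral>\<^sup>+ x. emeasure lborel (Pair x -` ((A \<times> UNIV) \<inter> Gamma M f)) \<partial>M)"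
    using assms by (intro lborel.emeasure_pair_measure_alt subgraph_restrict_sets)
  also have "\<dots> = (\<integral>\<^sup>+ x\<in>A. ennreal (f x) \<partial>M)"
  proof (rule nn_integral_cong)
    fix x assume "x \<in> space M"
    then have "Pair x -` ((A \<times> UNIV) \<inter> Gamma M f) = (if x \<in> A then {0..f x} else {})"
      by (auto simp: Gamma_def)
    then show "emeasure lborel (Pair x -` ((A \<times> UNIV) \<inter> Gamma M f)) = ennreal (f x) * indicator A x"
      using assms(2) \<open>x \<in> space M\<close> by simp
  qed
  finally show ?thesis .
qed

(* No integrability is needed: if f is not integrable on A, both sides are the junk value 0. *)
lemma measure_subgraph_restrict:
  assumes "f \<in> borel_measurable M" "\<And>x. x \<in> space M \<Longrightarrow> 0 \<le> f x" "A \<in> sets M"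
  shows "measure (M \<Otimes>\<^sub>M lborel) ((A \<times> UNIV) \<inter> Gamma M f) = (\<integral>x\<in>A. f x \<partial>M)"
proof -
  have "(\<integral>x\<in>A. f x \<partial>M) = enn2real (\<integral>\<^sup>+ x. ennreal (indicator A x * f x) \<partial>M)"
    unfolding set_lebesgue_integral_def real_scaleR_def using assms
    by (intro integral_eq_nn_integral AE_I2) (auto simp: indicator_def)
  also have "(\<integral>\<^sup>+ x. ennreal (indicator A x * f x) \<partial>M) = (\<integral>\<^sup>+ x\<in>A. ennreal (f x) \<partial>M)"
    by (intro nn_integral_cong) (simp split: split_indicator)
  finally show ?thesis
    using emeasure_subgraph_restrict[OF assms] by (simp add: measure_def)
qed

lemma measure_eq_sum_Int_AE_cover:
  assumes "finite I" and B: "\<And>i. i \<in> I \<Longrightarrow> B i \<in> fmeasurable M"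
    and disj: "\<And>i j. i \<in> I \<Longrightarrow> j \<in> I \<Longrightarrow> i \<noteq> j \<Longrightarrow> B i \<inter> B j \<in> null_sets M"
    and X: "X \<in> sets M" "X - (\<Union>i\<in>I. B i) \<in> null_sets M"
  shows "measure M X = (\<Sum>i\<in>I. measure M (X \<inter> B i))"
proof -
  have "measure M X = measure M (X - (X - (\<Union>i\<in>I. B i)))"
    using measure_Diff_null_set[OF X] by simp
  also have "X - (X - (\<Union>i\<in>I. B i)) = (\<Union>i\<in>I. X \<inter> B i)" by auto
  also have "measure M \<dots> = (\<Sum>i\<in>I. measure M (X \<inter> B i))"
  proof (rule measure_UNION_AE[OF \<open>finite I\<close>])
    show "X \<inter> B i \<in> fmeasurable M" if "i \<in> I" for i
      using fmeasurable_Int_fmeasurable[OF B[OF that] X(1)] by (simp add: Int_commute)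
    show "pairwise (\<lambda>i j. AE x in M. x \<notin> X \<inter> B i \<or> x \<notin> X \<inter> B j) I"
    proof (rule pairwiseI)
      fix i j assume "i \<in> I" "j \<in> I" "i \<noteq> j"
      show "AE x in M. x \<notin> X \<inter> B i \<or> x \<notin> X \<inter> B j"
        by (rule AE_I'[OF disj[OF \<open>i \<in> I\<close> \<open>j \<in> I\<close> \<open>i \<noteq> j\<close>]]) auto
    qed
  qed
  finally show ?thesis .
qed

lemma Least_threshold_eq_iff:
  fixes s :: "nat \<Rightarrow> 'a::linorder"
  assumes "mono s" "i \<in> {1..N}" "s 0 \<le> u" "u < s N"
  shows "(LEAST k. k \<in> {1..N} \<and> u < s k) = i \<longleftrightarrow> s (i - 1) \<le> u \<and> u < s i"
proof
  assume least: "(LEAST k. k \<in> {1..N} \<and> u < s k) = i"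
  have "(LEAST k. k \<in> {1..N} \<and> u < s k) \<in> {1..N} \<and> u < s (LEAST k. k \<in> {1..N} \<and> u < s k)"
    by (rule LeastI[of _ N]) (use assms(2,4) in auto)
  then have "u < s i"
    unfolding least ..
  moreover have "i - 1 < (LEAST k. k \<in> {1..N} \<and> u < s k)"
    unfolding least using assms(2) by simp
  then have "\<not> (i - 1 \<in> {1..N} \<and> u < s (i - 1))"
    by (rule not_less_Least)
  ultimately show "s (i - 1) \<le> u \<and> u < s i"
    using assms(2,3) by (cases "i = 1") auto
next
  assume between: "s (i - 1) \<le> u \<and> u < s i"
  show "(LEAST k. k \<in> {1..N} \<and> u < s k) = i"
  proof (rule Least_equality)
    show "i \<in> {1..N} \<and> u < s i"
      using assms(2) between by simp
    fix k assume k: "k \<in> {1..N} \<and> u < s k"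
    show "i \<le> k"
    proof (rule ccontr)
      assume "\<not> i \<le> k"
      then have "s k \<le> s (i - 1)"
        by (intro monoD[OF assms(1)]) simp
      then show False
        using between k by (meson order.trans not_le)
    qed
  qed
qed

lemma disjoint_family_mono_Ico:
  fixes s :: "nat \<Rightarrow> 'a::linorder"
  assumes "mono s"
  shows "disjoint_family (\<lambda>i. {s (i - 1)..<s i})"
proof -
  have "{s (i - 1)..<s i} \<inter> {s (j - 1)..<s j} = {}" if "i < j" for i j
  proof -
    have "s i \<le> s (j - 1)"
      using that by (intro monoD[OF assms]) simp
    then show ?thesis
      by (simp add: set_eq_iff) (meson le_less_trans not_le order.trans)
  qed
  then show ?thesis
    unfolding disjoint_family_on_def by (metis Int_commute linorder_neqE)
qed

definition cum_weight :: "'b measure \<Rightarrow> nat \<Rightarrow> (nat \<Rightarrow> 'b set) \<Rightarrow> nat \<Rightarrow> real" where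
  "cum_weight nu N B i = (\<Sum>j=1..i. measure nu (B j) / measure nu (Bunion N B))"

lemma Psi_eq_Least_cum_weight:
  "Psi nu N B u = (LEAST i. i \<in> {1..N} \<and> u < cum_weight nu N B i)"
  by (simp add: Psi_def cum_weight_def)

lemma cum_weight_0 [simp]: "cum_weight nu N B 0 = 0"
  by (simp add: cum_weight_def)

lemma cum_weight_Suc:
  "cum_weight nu N B (Suc i)
    = cum_weight nu N B i + measure nu (B (Suc i)) / measure nu (Bunion N B)"
  by (simp add: cum_weight_def)

lemma mono_cum_weight: "mono (cum_weight nu N B)"
  by (rule incseq_SucI) (simp add: cum_weight_Suc)

lemma measure_uniform_Ico:
  assumes uniform: "\<And>D. D \<in> sets borel \<Longrightarrow>
      emeasure P {\<omega>\<in>space P. U \<omega> \<in> D} = (\<integral>\<^sup>+ u. indicator D u * indicator {0..<1} u \<partial>lborel)"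
    and "0 \<le> a" "a \<le> b" "b \<le> 1"
  shows "measure P {\<omega>\<in>space P. U \<omega> \<in> {a..<b}} = b - a"
proof -
  have "emeasure P {\<omega>\<in>space P. U \<omega> \<in> {a..<b}} = (\<integral>\<^sup>+ u. indicator {a..<b} u \<partial>lborel)"
    using assms(2-4) unfolding uniform[OF atLeastLessThan_borel]
    by (intro nn_integral_cong) (auto split: split_indicator)
  then show ?thesis
    using \<open>a \<le> b\<close> by (simp add: measure_def)
qed

locale subgraph_cover =
  fixes M :: "'e measure" and f :: "'e \<Rightarrow> real" and N :: nat
    and B :: "nat \<Rightarrow> ('e \<times> real) set"
  assumes f_borel: "f \<in> borel_measurable M"
    and f_nonneg: "\<And>x. x \<in> space M \<Longrightarrow> 0 \<le> f x"
    and nn_integral_f_pos: "(\<integral>\<^sup>+ x. ennreal (f x) \<partial>M) > 0"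
    and B_sets: "\<And>i. i \<in> {1..N} \<Longrightarrow> B i \<in> sets (M \<Otimes>\<^sub>M lborel)"
    and B_pos: "\<And>i. i \<in> {1..N} \<Longrightarrow> emeasure (M \<Otimes>\<^sub>M lborel) (B i) > 0"
    and B_AE_disjoint: "\<And>i j. i \<in> {1..N} \<Longrightarrow> j \<in> {1..N} \<Longrightarrow> i \<noteq> j \<Longrightarrow>
      emeasure (M \<Otimes>\<^sub>M lborel) (B i \<inter> B j) = 0"
    and Gamma_AE_covered: "emeasure (M \<Otimes>\<^sub>M lborel) (Gamma M f - Bunion N B) = 0"
    and Bunion_finite: "emeasure (M \<Otimes>\<^sub>M lborel) (Bunion N B) < \<infinity>"
begin

abbreviation nu :: "('e \<times> real) measure" where
  "nu \<equiv> M \<Otimes>\<^sub>M lborel"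

lemma Bunion_sets: "Bunion N B \<in> sets nu"
  using B_sets by (auto simp: Bunion_def)

lemma B_fmeasurable:
  assumes "i \<in> {1..N}"
  shows "B i \<in> fmeasurable nu"
proof (rule fmeasurableI2)
  show "Bunion N B \<in> fmeasurable nu"
    using Bunion_sets Bunion_finite by (intro fmeasurableI) auto
  show "B i \<subseteq> Bunion N B"
    using assms by (auto simp: Bunion_def)
qed (use B_sets assms in auto)

lemma measure_B_pos:
  assumes "i \<in> {1..N}"
  shows "measure nu (B i) > 0"
  using B_pos[OF assms] B_fmeasurable[OF assms]
  by (simp add: measure_def enn2real_positive_iff fmeasurable_def)

lemma Diff_Bunion_null_sets:
  assumes "X \<in> sets nu" "X \<subseteq> Bunion N B \<union> Gamma M f"
  shows "X - (\<Union>i\<in>{1..N}. B i) \<in> null_sets nu"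
proof (rule null_sets_subset)
  show "Gamma M f - Bunion N B \<in> null_sets nu"
    using Gamma_AE_covered Gamma_sets[OF f_borel] Bunion_sets by (auto intro: null_setsI)
qed (use assms Bunion_sets in \<open>auto simp: Bunion_def intro: sets.Diff\<close>)

lemma measure_eq_sum_Int_B:
  assumes "X \<in> sets nu" "X \<subseteq> Bunion N B \<union> Gamma M f"
  shows "measure nu X = (\<Sum>i\<in>{1..N}. measure nu (X \<inter> B i))"
  using B_fmeasurable B_sets B_AE_disjoint Diff_Bunion_null_sets[OF assms]
  by (intro measure_eq_sum_Int_AE_cover[OF _ _ _ assms(1)]) (auto intro: null_setsI)

lemma measure_Bunion_eq_sum: "measure nu (Bunion N B) = (\<Sum>i\<in>{1..N}. measure nu (B i))"
proof -
  have "measure nu (Bunion N B) = (\<Sum>i\<in>{1..N}. measure nu (Bunion N B \<inter> B i))"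
    using Bunion_sets by (intro measure_eq_sum_Int_B) auto
  also have "\<dots> = (\<Sum>i\<in>{1..N}. measure nu (B i))"
    by (intro sum.cong refl arg_cong2[where f = measure]) (auto simp: Bunion_def)
  finally show ?thesis .
qed

lemma N_pos: "1 \<le> N"
proof (rule ccontr)
  assume "\<not> 1 \<le> N"
  then have "emeasure nu (Gamma M f) = 0"
    using Gamma_AE_covered by (simp add: Bunion_def)
  moreover have "Gamma M f = (space M \<times> UNIV) \<inter> Gamma M f"
    by (auto simp: Gamma_def)
  moreover have "(\<integral>\<^sup>+ x\<in>space M. ennreal (f x) \<partial>M) = (\<integral>\<^sup>+ x. ennreal (f x) \<partial>M)"
    by (rule nn_integral_cong) simp
  ultimately show False
    using emeasure_subgraph_restrict[OF f_borel f_nonneg sets.top] nn_integral_f_pos by simp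
qed

lemma measure_Bunion_pos: "measure nu (Bunion N B) > 0"
  unfolding measure_Bunion_eq_sum using N_pos measure_B_pos by (intro sum_pos) auto

lemma cum_weight_N: "cum_weight nu N B N = 1"
  using measure_Bunion_pos
  by (simp add: cum_weight_def sum_divide_distrib[symmetric] measure_Bunion_eq_sum)

lemma cum_weight_bounds:
  assumes "i \<le> N"
  shows "0 \<le> cum_weight nu N B i" "cum_weight nu N B i \<le> 1"
  using monoD[OF mono_cum_weight[of nu N B], of 0 i] monoD[OF mono_cum_weight[of nu N B] assms]
    cum_weight_N by auto

lemma Psi_eq_iff:
  assumes "i \<in> {1..N}" "u \<in> {0..<1}"
  shows "Psi nu N B u = i \<longleftrightarrow> u \<in> {cum_weight nu N B (i - 1)..<cum_weight nu N B i}"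
  unfolding Psi_eq_Least_cum_weight using assms cum_weight_N
  by (subst Least_threshold_eq_iff[OF mono_cum_weight]) auto

lemma Psi_mem:
  assumes "u \<in> {0..<1}"
  shows "Psi nu N B u \<in> {1..N}"
  unfolding Psi_eq_Least_cum_weight
  by (rule LeastI2[of _ N]) (use N_pos assms cum_weight_N in auto)

lemma mem_Lambda_iff:
  assumes "\<forall>i\<in>{1..N}. v i \<in> space M"
  shows "v (Psi nu N B u) \<in> A \<and> (u, v, w) \<in> Lambda M f N B \<longleftrightarrow>
    (\<exists>i\<in>{1..N}. u \<in> {cum_weight nu N B (i - 1)..<cum_weight nu N B i} \<and>
      (v i, w i) \<in> (A \<times> UNIV) \<inter> Gamma M f \<inter> B i)"
proof
  assume lhs: "v (Psi nu N B u) \<in> A \<and> (u, v, w) \<in> Lambda M f N B"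
  then have "u \<in> {0..<1}"
    by (simp add: Lambda_def)
  moreover from this have "Psi nu N B u \<in> {1..N}"
    by (rule Psi_mem)
  ultimately show "\<exists>i\<in>{1..N}. u \<in> {cum_weight nu N B (i - 1)..<cum_weight nu N B i} \<and>
      (v i, w i) \<in> (A \<times> UNIV) \<inter> Gamma M f \<inter> B i"
    using lhs Psi_eq_iff[of "Psi nu N B u" u] by (auto simp: Lambda_def)
next
  assume "\<exists>i\<in>{1..N}. u \<in> {cum_weight nu N B (i - 1)..<cum_weight nu N B i} \<and>
      (v i, w i) \<in> (A \<times> UNIV) \<inter> Gamma M f \<inter> B i"
  then obtain i where i: "i \<in> {1..N}" "u \<in> {cum_weight nu N B (i - 1)..<cum_weight nu N B i}"
    "(v i, w i) \<in> (A \<times> UNIV) \<inter> Gamma M f \<inter> B i"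
    by blast
  have "i - 1 \<le> N" "i \<le> N"
    using i(1) by auto
  then have "u \<in> {0..<1}"
    using i(2) cum_weight_bounds[of "i - 1"] cum_weight_bounds[of i] by auto
  moreover from this have "Psi nu N B u = i"
    using Psi_eq_iff i(1,2) by blast
  ultimately show "v (Psi nu N B u) \<in> A \<and> (u, v, w) \<in> Lambda M f N B"
    using i assms by (auto simp: Lambda_def)
qed

lemma set_integral_eq_sum_measure_subgraph:
  assumes "A \<in> sets M"
  shows "(\<integral>x\<in>A. f x \<partial>M) = (\<Sum>i\<in>{1..N}. measure nu ((A \<times> UNIV) \<inter> Gamma M f \<inter> B i))"
proof -
  have "measure nu ((A \<times> UNIV) \<inter> Gamma M f)
      = (\<Sum>i\<in>{1..N}. measure nu ((A \<times> UNIV) \<inter> Gamma M f \<inter> B i))"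
    using subgraph_restrict_sets[OF f_borel assms] by (intro measure_eq_sum_Int_B) auto
  then show ?thesis
    using measure_subgraph_restrict[OF f_borel f_nonneg assms] by simp
qed

end

locale subgraph_sampler = subgraph_cover M f N B + P: prob_space P
  for M :: "'e measure" and f :: "'e \<Rightarrow> real" and N :: nat
    and B :: "nat \<Rightarrow> ('e \<times> real) set" and P :: "'w measure" +
  fixes U :: "'w \<Rightarrow> real" and V :: "nat \<Rightarrow> 'w \<Rightarrow> 'e" and W :: "nat \<Rightarrow> 'w \<Rightarrow> real"
  assumes U_borel: "U \<in> borel_measurable P"
    and V_measurable: "\<And>i. i \<in> {1..N} \<Longrightarrow> V i \<in> measurable P M"
    and W_borel: "\<And>i. i \<in> {1..N} \<Longrightarrow> W i \<in> borel_measurable P"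
    and indep_U: "\<And>i C D. i \<in> {1..N} \<Longrightarrow> C \<in> sets (M \<Otimes>\<^sub>M lborel) \<Longrightarrow> D \<in> sets borel \<Longrightarrow>
      measure P {\<omega>\<in>space P. (V i \<omega>, W i \<omega>) \<in> C \<and> U \<omega> \<in> D}
        = measure P {\<omega>\<in>space P. (V i \<omega>, W i \<omega>) \<in> C} * measure P {\<omega>\<in>space P. U \<omega> \<in> D}"
    and distr_VW: "\<And>i C. i \<in> {1..N} \<Longrightarrow> C \<in> sets (M \<Otimes>\<^sub>M lborel) \<Longrightarrow>
      measure P {\<omega>\<in>space P. (V i \<omega>, W i \<omega>) \<in> C}
        = measure (M \<Otimes>\<^sub>M lborel) (C \<inter> B i) / measure (M \<Otimes>\<^sub>M lborel) (B i)"
    and uniform_U: "\<And>D. D \<in> sets borel \<Longrightarrow> emeasure P {\<omega>\<in>space P. U \<omega> \<in> D}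
      = (\<integral>\<^sup>+ u. indicator D u * indicator {0..<1} u \<partial>lborel)"
begin

definition accept_event :: "'e set \<Rightarrow> nat \<Rightarrow> 'w set" where
  "accept_event A i = {\<omega>\<in>space P. (V i \<omega>, W i \<omega>) \<in> (A \<times> UNIV) \<inter> Gamma M f \<inter> B i \<and>
     U \<omega> \<in> {cum_weight nu N B (i - 1)..<cum_weight nu N B i}}"

lemma selected_event_eq_UN_accept_event:
  "{\<omega>\<in>space P. V (Psi nu N B (U \<omega>)) \<omega> \<in> A \<and>
      (U \<omega>, (\<lambda>i. V i \<omega>), (\<lambda>i. W i \<omega>)) \<in> Lambda M f N B} = (\<Union>i\<in>{1..N}. accept_event A i)"
proof -
  have "V (Psi nu N B (U \<omega>)) \<omega> \<in> A \<and> (U \<omega>, (\<lambda>i. V i \<omega>), (\<lambda>i. W i \<omega>)) \<in> Lambda M f N B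
      \<longleftrightarrow> (\<exists>i\<in>{1..N}. \<omega> \<in> accept_event A i)" if "\<omega> \<in> space P" for \<omega>
  proof -
    have V_space: "\<forall>i\<in>{1..N}. V i \<omega> \<in> space M"
      using that V_measurable by (auto intro: measurable_space)
    show ?thesis
      unfolding mem_Lambda_iff[OF V_space] using that by (auto simp: accept_event_def)
  qed
  moreover have "accept_event A i \<subseteq> space P" for i
    by (auto simp: accept_event_def)
  ultimately show ?thesis
    by blast
qed

lemma accept_event_sets:
  assumes "A \<in> sets M" "i \<in> {1..N}"
  shows "accept_event A i \<in> sets P"
proof -
  have [measurable]: "V i \<in> measurable P M" "W i \<in> borel_measurable P" "U \<in> borel_measurable P"
      "(A \<times> UNIV) \<inter> Gamma M f \<inter> B i \<in> sets nu"
    using assms V_measurable W_borel U_borel subgraph_restrict_sets[OF f_borel] B_sets by auto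
  show ?thesis
    unfolding accept_event_def by measurable
qed

lemma disjoint_family_on_accept_event: "disjoint_family_on (accept_event A) {1..N}"
  using disjoint_family_on_mono[OF subset_UNIV
      disjoint_family_mono_Ico[OF mono_cum_weight[of nu N B]]]
  by (rule disjoint_family_on_bisimulation) (auto simp: accept_event_def)

lemma measure_accept_event:
  assumes "A \<in> sets M" "i \<in> {1..N}"
  shows "measure P (accept_event A i)
    = measure nu ((A \<times> UNIV) \<inter> Gamma M f \<inter> B i) / measure nu (Bunion N B)"
proof -
  define s where "s = cum_weight nu N B"
  define C where "C = (A \<times> UNIV) \<inter> Gamma M f \<inter> B i"
  have C: "C \<in> sets nu"
    unfolding C_def using subgraph_restrict_sets[OF f_borel assms(1)] B_sets[OF assms(2)] by blast
  have "s i - s (i - 1) = measure P {\<omega>\<in>space P. U \<omega> \<in> {s (i - 1)..<s i}}"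
    using monoD[OF mono_cum_weight, of "i - 1" i] cum_weight_bounds assms(2)
    by (intro measure_uniform_Ico[OF uniform_U, symmetric]) (auto simp: s_def)
  then have "measure P (accept_event A i)
      = measure P {\<omega>\<in>space P. (V i \<omega>, W i \<omega>) \<in> C} * (s i - s (i - 1))"
    unfolding accept_event_def using indep_U[OF assms(2) C atLeastLessThan_borel]
    by (simp add: s_def C_def)
  also have "\<dots> = measure nu C / measure nu (B i) * (measure nu (B i) / measure nu (Bunion N B))"
    using distr_VW[OF assms(2) C] cum_weight_Suc[of nu N B "i - 1"] assms(2)
    by (simp add: s_def C_def Int_assoc)
  also have "\<dots> = measure nu C / measure nu (Bunion N B)"
    using measure_B_pos[OF assms(2)] by simp
  finally show ?thesis
    unfolding C_def .
qed

lemma measure_selected_in_Lambda: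
  assumes "A \<in> sets M"
  shows "measure P {\<omega>\<in>space P. V (Psi nu N B (U \<omega>)) \<omega> \<in> A \<and>
      (U \<omega>, (\<lambda>i. V i \<omega>), (\<lambda>i. W i \<omega>)) \<in> Lambda M f N B}
    = (\<integral>x\<in>A. f x \<partial>M) / measure nu (Bunion N B)"
proof -
  have "measure P (\<Union>i\<in>{1..N}. accept_event A i) = (\<Sum>i\<in>{1..N}. measure P (accept_event A i))"
    using accept_event_sets[OF assms] disjoint_family_on_accept_event
    by (intro P.finite_measure_finite_Union) auto
  also have "\<dots> = (\<integral>x\<in>A. f x \<partial>M) / measure nu (Bunion N B)"
    by (simp add: measure_accept_event[OF assms] set_integral_eq_sum_measure_subgraph[OF assms]
        sum_divide_distrib)
  finally show ?thesis
    unfolding selected_event_eq_UN_accept_event .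
qed

end

theorem lemma2p1:
  fixes M :: "'e measure" and f :: "'e \<Rightarrow> real" and N :: nat
    and B :: "nat \<Rightarrow> ('e \<times> real) set"
    and P :: "'w measure" and U :: "'w \<Rightarrow> real"
    and V :: "nat \<Rightarrow> 'w \<Rightarrow> 'e" and W :: "nat \<Rightarrow> 'w \<Rightarrow> real"
  assumes "sigma_finite_measure M"
    and "f \<in> borel_measurable M"
    and "\<forall>x\<in>space M. f x \<ge> 0"
    and "(\<integral>\<^sup>+ x. ennreal (f x) \<partial>M) > 0"
    and "(\<integral>\<^sup>+ x. ennreal (f x) \<partial>M) < \<infinity>"
    and "\<forall>i\<in>{1..N}. B i \<in> sets (M \<Otimes>\<^sub>M lborel)"
    and "\<forall>i\<in>{1..N}. emeasure (M \<Otimes>\<^sub>M lborel) (B i) > 0"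
    and "\<forall>i\<in>{1..N}. \<forall>j\<in>{1..N}. i \<noteq> j \<longrightarrow> emeasure (M \<Otimes>\<^sub>M lborel) (B i \<inter> B j) = 0"
    and "emeasure (M \<Otimes>\<^sub>M lborel) (Gamma M f - Bunion N B) = 0"
    and "emeasure (M \<Otimes>\<^sub>M lborel) (Bunion N B) < \<infinity>"
    and "prob_space P"
    and "U \<in> borel_measurable P"
    and "\<forall>i\<in>{1..N}. V i \<in> measurable P M"
    and "\<forall>i\<in>{1..N}. W i \<in> borel_measurable P"
    and "\<forall>i\<in>{1..N}. \<forall>C\<in>sets (M \<Otimes>\<^sub>M lborel). \<forall>D\<in>sets borel.
           measure P {\<omega>\<in>space P. (V i \<omega>, W i \<omega>) \<in> C \<and> U \<omega> \<in> D}
             = measure P {\<omega>\<in>space P. (V i \<omega>, W i \<omega>) \<in> C} * measure P {\<omega>\<in>space P. U \<omega> \<in> D}"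
    and "\<forall>i\<in>{1..N}. \<forall>C\<in>sets (M \<Otimes>\<^sub>M lborel).
           measure P {\<omega>\<in>space P. (V i \<omega>, W i \<omega>) \<in> C}
             = measure (M \<Otimes>\<^sub>M lborel) (C \<inter> B i) / measure (M \<Otimes>\<^sub>M lborel) (B i)"
    and "\<forall>D\<in>sets borel. emeasure P {\<omega>\<in>space P. U \<omega> \<in> D}
           = (\<integral>\<^sup>+ u. indicator D u * indicator {0..<1} u \<partial>lborel)"
    and "A \<in> sets M"
  shows "measure P {\<omega>\<in>space P.
            V (Psi (M \<Otimes>\<^sub>M lborel) N B (U \<omega>)) \<omega> \<in> A \<and>
            (U \<omega>, (\<lambda>i. V i \<omega>), (\<lambda>i. W i \<omega>)) \<in> Lambda M f N B}
         = (1 / measure (M \<Otimes>\<^sub>M lborel) (Bunion N B)) * (\<integral>x\<in>A. f x \<partial>M)"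
proof -
  interpret subgraph_sampler M f N B P U V W
  proof (intro subgraph_sampler.intro subgraph_cover.intro subgraph_sampler_axioms.intro)
  qed (use assms in auto)
  show ?thesis
    using measure_selected_in_Lambda[OF assms(18)] by simp
qed

end
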